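(* Let $G=(\Gamma,s)$ be a connected rooted graph with $\tilde V\neq\emptyset$. Every $p\in\mathrm{PF}(G)$ admits a prime decomposition, i.e. an ordered set partition $(A_1,\dots,A_k)$ of $\tilde V$ into nonempty blocks such that for every $i\in[k]$, the function $p^{A_i}:A_i\to\mathbb{Z}$ defined by $p^{A_i}(v)=p(v)-\deg^{A_1\cup\dots\cup A_{i-1}}(v)$ belongs to $\mathrm{PPF}(G^{A_i})$.
   Context: $\mathbb{N}=\{1,2,\dots\}$. A rooted graph $G=(\Gamma,s)$ is a finite undirected multigraph without loops with a distinguished vertex $s$ (the sink), possibly disconnected; $V$ is its vertex set and $\tilde V=V\setminus\{s\}$. $\mathrm{mult}(vw)$ is the number of edges between $v,w$; for $A\subseteq V$, $\deg^A(v)=\sum_{w\in A}\mathrm{mult}(vw)$. A $G$-parking function is a function $p:\tilde V\to\mathbb{N}$ such that for every nonempty $S\subseteq\tilde V$ there exists $v\in S$ with $p(v)\le\deg^{V\setminus S}(v)$; $\mathrm{PF}(G)$ is their set. For $A\subseteq\tilde V$, $G^A$ is the induced subgraph on $A\cup\{s\}$ rooted at $s$. For an ordered pair $(A,B)$ of nonempty disjoint sets with $A\cup B=\tilde V$ and $p\in\mathrm{PF}(G)$, $p^A(v)=p(v)$ for $v\in A$ and $p^B(v)=p(v)-\deg^A(v)$ for $v\in B$; $p$ is decomposable w.r.t. $(A,B)$ if $p^A\in\mathrm{PF}(G^A)$ and $p^B\in\mathrm{PF}(G^B)$. $p$ is prime if it is decomposable w.r.t. no such $(A,B)$ (in particular,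 if $|\tilde V|=1$ every parking function is prime). $\mathrm{PPF}(G)$ is the set of prime $G$-parking functions. *)

theory Defs
  imports Main
begin

definition rooted_graph :: "'a set \<Rightarrow> 'a \<Rightarrow> ('a \<Rightarrow> 'a \<Rightarrow> nat) \<Rightarrow> bool" where
  "rooted_graph V s mult \<longleftrightarrow> finite V \<and> s \<in> V \<and>
     (\<forall>v w. mult v w = mult w v) \<and> (\<forall>v. mult v v = 0) \<and>
     (\<forall>v w. mult v w > 0 \<longrightarrow> v \<in> V \<and> w \<in> V)"

definition connected_graph :: "'a set \<Rightarrow> ('a \<Rightarrow> 'a \<Rightarrow> nat) \<Rightarrow> bool" where
  "connected_graph V mult \<longleftrightarrow>
     (\<forall>v\<in>V. \<forall>w\<in>V. (\<lambda>x y. x \<in> V \<and> y \<in> V \<and> mult x y > 0)\<^sup>*\<^sup>* v w)"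

definition deg :: "('a \<Rightarrow> 'a \<Rightarrow> nat) \<Rightarrow> 'a set \<Rightarrow> 'a \<Rightarrow> int" where
  "deg mult A v = (\<Sum>w\<in>A. int (mult v w))"

text \<open>The induced subgraph G^A is (A \<union> {s}, s) with the same mult.\<close>
definition is_PF :: "'a set \<Rightarrow> 'a \<Rightarrow> ('a \<Rightarrow> 'a \<Rightarrow> nat) \<Rightarrow> ('a \<Rightarrow> int) \<Rightarrow> bool" where
  "is_PF V s mult p \<longleftrightarrow> (\<forall>v\<in>V - {s}. p v \<ge> 1) \<and>
     (\<forall>S. S \<subseteq> V - {s} \<and> S \<noteq> {} \<longrightarrow> (\<exists>v\<in>S. p v \<le> deg mult (V - S) v))"

definition is_PPF :: "'a set \<Rightarrow> 'a \<Rightarrow> ('a \<Rightarrow> 'a \<Rightarrow> nat) \<Rightarrow> ('a \<Rightarrow> int) \<Rightarrow> bool" where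
  "is_PPF V s mult p \<longleftrightarrow> is_PF V s mult p \<and>
     \<not> (\<exists>A B. A \<noteq> {} \<and> B \<noteq> {} \<and> A \<inter> B = {} \<and> A \<union> B = V - {s} \<and>
            is_PF (A \<union> {s}) s mult p \<and>
            is_PF (B \<union> {s}) s mult (\<lambda>v. p v - deg mult A v))"

end

theory Submission
  imports Defs
begin

text \<open>Split a parking function that is not prime along a decomposing pair (A, B) and
  decompose both halves by induction on the number of non-sink vertices; the prime
  decompositions of p on A and of p - deg A on B concatenate to one of p, because
  deg is additive in its set argument.\<close>

definition ordered_set_partition :: "'a set \<Rightarrow> 'a set list \<Rightarrow> bool" where
  "ordered_set_partition W As \<longleftrightarrow>
     (\<forall>i < length As. As ! i \<noteq> {}) \<and>
     (\<forall>i < length As. \<forall>j < length As. i \<noteq> j \<longrightarrow> As ! i \<inter> As ! j = {}) \<and>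
     \<Union> (set As) = W"

definition prime_decomposition ::
    "'a set \<Rightarrow> 'a \<Rightarrow> ('a \<Rightarrow> 'a \<Rightarrow> nat) \<Rightarrow> ('a \<Rightarrow> int) \<Rightarrow> 'a set list \<Rightarrow> bool" where
  "prime_decomposition W s mult p As \<longleftrightarrow>
     ordered_set_partition W As \<and>
     (\<forall>i < length As. is_PPF (As ! i \<union> {s}) s mult
                        (\<lambda>v. p v - deg mult (\<Union> (set (take i As))) v))"

lemma deg_Un_disjoint:
  assumes "finite A" "finite B" "A \<inter> B = {}"
  shows "deg mult (A \<union> B) v = deg mult A v + deg mult B v"
  unfolding deg_def using assms by (simp add: sum.union_disjoint)

lemma ordered_set_partition_append:
  assumes "ordered_set_partition A As" "ordered_set_partition B Bs" "A \<inter> B = {}"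
  shows "ordered_set_partition (A \<union> B) (As @ Bs)"
proof -
  let ?Cs = "As @ Bs"
  have in_A: "?Cs ! k \<subseteq> A" if "k < length As" for k
    using assms(1) that nth_mem[of k As]
    unfolding ordered_set_partition_def by (auto simp: nth_append)
  have in_B: "?Cs ! k \<subseteq> B" if "\<not> k < length As" "k < length ?Cs" for k
    using assms(2) that nth_mem[of "k - length As" Bs]
    unfolding ordered_set_partition_def by (auto simp: nth_append)
  have "?Cs ! i \<inter> ?Cs ! j = {}"
    if "i < length ?Cs" "j < length ?Cs" "i \<noteq> j" for i j
  proof (cases "i < length As"; cases "j < length As")
    assume "i < length As" "j < length As"
    then show ?thesis using assms(1) that unfolding ordered_set_partition_def
      by (simp add: nth_append)
  next
    assume "\<not> i < length As" "\<not> j < length As"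
    then show ?thesis
      using assms(2) that unfolding ordered_set_partition_def
      by (auto simp: nth_append dest!: spec[of _ "i - length As"] spec[of _ "j - length As"])
  qed (use in_A in_B assms(3) that in blast)+
  then show ?thesis
    using assms unfolding ordered_set_partition_def by (auto simp: nth_append)
qed

lemma prime_decomposition_single:
  assumes "W \<noteq> {}" "s \<notin> W" "is_PPF (W \<union> {s}) s mult p"
  shows "prime_decomposition W s mult p [W]"
  using assms by (simp add: prime_decomposition_def ordered_set_partition_def deg_def)

lemma prime_decomposition_append:
  assumes "finite A" "finite B" "A \<inter> B = {}"
    and "prime_decomposition A s mult p As"
    and "prime_decomposition B s mult (\<lambda>v. p v - deg mult A v) Bs"
  shows "prime_decomposition (A \<union> B) s mult p (As @ Bs)"
proof -
  have shifted: "is_PPF ((As @ Bs) ! i \<union> {s}) s mult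
                   (\<lambda>v. p v - deg mult (\<Union> (set (take i (As @ Bs)))) v)"
    if "length As \<le> i" "i < length (As @ Bs)" for i
  proof -
    define j where "j = i - length As"
    let ?C = "\<Union> (set (take j Bs))"
    have "?C \<subseteq> B"
      using assms(5) set_take_subset[of j Bs]
      unfolding prime_decomposition_def ordered_set_partition_def by blast
    then have "deg mult (A \<union> ?C) v = deg mult A v + deg mult ?C v" for v
      using assms(1-3) finite_subset[of ?C B] by (intro deg_Un_disjoint) auto
    moreover have "\<Union> (set (take i (As @ Bs))) = A \<union> ?C"
      using assms(4) that unfolding prime_decomposition_def ordered_set_partition_def j_def
      by simp
    ultimately show ?thesis
      using assms(5) that unfolding prime_decomposition_def j_def
      by (auto simp: nth_append algebra_simps)
  qed
  have "is_PPF ((As @ Bs) ! i \<union> {s}) s mult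
          (\<lambda>v. p v - deg mult (\<Union> (set (take i (As @ Bs)))) v)"
    if "i < length (As @ Bs)" for i
  proof (cases "i < length As")
    case True
    then show ?thesis using assms(4) unfolding prime_decomposition_def by (simp add: nth_append)
  qed (use shifted that in simp)
  then show ?thesis
    using assms(3-5) ordered_set_partition_append[of A As B Bs]
    unfolding prime_decomposition_def by blast
qed

lemma prime_decomposition_exists:
  assumes "finite W" "W \<noteq> {}" "s \<notin> W" "is_PF (W \<union> {s}) s mult p"
  shows "\<exists>As. prime_decomposition W s mult p As"
  using assms
proof (induction "card W" arbitrary: W p rule: less_induct)
  case less
  show ?case
  proof (cases "is_PPF (W \<union> {s}) s mult p")
    case True
    show ?thesis using prime_decomposition_single[OF less.prems(2,3) True] by blast
  next
    case False
    have "W \<union> {s} - {s} = W" using less.prems(3) by auto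
    then obtain A B where AB: "A \<noteq> {}" "B \<noteq> {}" "A \<inter> B = {}" "A \<union> B = W"
      "is_PF (A \<union> {s}) s mult p" "is_PF (B \<union> {s}) s mult (\<lambda>v. p v - deg mult A v)"
      using False less.prems(4) unfolding is_PPF_def by metis
    have "finite A" "finite B" using AB(4) less.prems(1) by auto
    moreover have "card A < card W" "card B < card W"
      using AB(1-4) less.prems(1) by (auto intro!: psubset_card_mono)
    moreover have "s \<notin> A" "s \<notin> B" using AB(4) less.prems(3) by auto
    ultimately obtain As Bs where
      "prime_decomposition A s mult p As"
      "prime_decomposition B s mult (\<lambda>v. p v - deg mult A v) Bs"
      using less.hyps AB(1,2,5,6) by meson
    then show ?thesis
      using prime_decomposition_append[OF \<open>finite A\<close> \<open>finite B\<close> AB(3)] AB(4) by blast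
  qed
qed

theorem proposition2p5:
  fixes V :: "'a set" and s :: 'a and mult :: "'a \<Rightarrow> 'a \<Rightarrow> nat" and p :: "'a \<Rightarrow> int"
  assumes "rooted_graph V s mult"
    and "connected_graph V mult"
    and "V - {s} \<noteq> {}"
    and "is_PF V s mult p"
  shows "\<exists>As :: 'a set list.
           (\<forall>i < length As. As ! i \<noteq> {}) \<and>
           (\<forall>i < length As. \<forall>j < length As. i \<noteq> j \<longrightarrow> As ! i \<inter> As ! j = {}) \<and>
           \<Union> (set As) = V - {s} \<and>
           (\<forall>i < length As.
              is_PPF (As ! i \<union> {s}) s mult
                (\<lambda>v. p v - deg mult (\<Union> (set (take i As))) v))"
proof -
  have "finite V" "s \<in> V" using assms(1) unfolding rooted_graph_def by auto
  then have "finite (V - {s})" "V - {s} \<union> {s} = V" by auto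
  then obtain As where "prime_decomposition (V - {s}) s mult p As"
    using prime_decomposition_exists[of "V - {s}" s mult p] assms(3,4) by auto
  then show ?thesis
    unfolding prime_decomposition_def ordered_set_partition_def conj_assoc by (rule exI)
qed

end
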